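(* Let $(\{X\},\{Y\},T)$ be a stationary and ergodic random triple, where $\{X\},\{Y\}$ are independent unit-intensity Poisson point processes in $\mathbb{R}^d$ and $T$ is a cyclically monotone bijection from $\{X\}$ onto $\{Y\}$. Then for every $\varepsilon>0$ there exist a deterministic $L<\infty$ and a random radius $r_*<\infty$ almost surely such that for all $R\ge r_*$ $$\#\{X\in(-R,R)^d : |T(X)-X|>L\}\le(\varepsilon R)^d.$$
   Context: Cyclic monotonicity of $T$: for every finite $\{X_1,\dots,X_N\}\subset\{X\}$, $\sum_{n=1}^N T(X_n)\cdot(X_n-X_{n-1})\ge0$ with $X_0:=X_N$. Measurability: for all Lebesgue-measurable $U,V$ (one of finite measure), $N_{U,V}:=\#\{(X,Y)\in U\times V:Y=T(X)\}$ is a random variable. Stationarity and ergodicity are with respect to the $\mathbb{Z}^d$-action $(\{X\},\{Y\},T)\mapsto(\{\bar x+X\},\{\bar x+Y\},T(\cdot-\bar x)+\bar x)$, $\bar x\in\mathbb{Z}^d$. *)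

theory Defs
  imports "HOL-Probability.Probability"
begin

definition ecount :: "'b set \<Rightarrow> 'b set \<Rightarrow> ennreal" where
  "ecount S B = emeasure (count_space UNIV) (S \<inter> B)"

definition config_space :: "('a::euclidean_space) set measure" where
  "config_space = sigma UNIV
     {{S. ecount S B \<in> A} | B A. B \<in> sets borel \<and> bounded B \<and> A \<in> sets (borel :: ennreal measure)}"

definition unit_poisson_pp :: "'w measure \<Rightarrow> ('w \<Rightarrow> ('a::euclidean_space) set) \<Rightarrow> bool" where
  "unit_poisson_pp M Xs \<longleftrightarrow>
     Xs \<in> measurable M config_space \<and>
     (AE \<omega> in M. \<forall>B. bounded B \<longrightarrow> finite (Xs \<omega> \<inter> B)) \<and>
     (\<forall>B \<in> sets borel. bounded B \<longrightarrow> (\<forall>n::nat.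
        measure M {\<omega> \<in> space M. ecount (Xs \<omega>) B = of_nat n}
          = exp (- measure lborel B) * measure lborel B ^ n / fact n)) \<and>
     (\<forall>(I::nat set) Bs. finite I \<longrightarrow> disjoint_family_on Bs I \<longrightarrow>
        (\<forall>i\<in>I. Bs i \<in> sets borel \<and> bounded (Bs i)) \<longrightarrow>
        prob_space.indep_vars M (\<lambda>_. borel) (\<lambda>i \<omega>. ecount (Xs \<omega>) (Bs i)) I)"

(* The graph {(X, T X) : X \<in> Xs} encodes the triple ({X},{Y},T) (as Y = T X). *)
definition graph_of :: "'a set \<Rightarrow> ('a \<Rightarrow> 'a) \<Rightarrow> ('a \<times> 'a) set" where
  "graph_of Xs T = {(x, T x) | x. x \<in> Xs}"

definition pair_count :: "('a \<times> 'a) set \<Rightarrow> 'a set \<Rightarrow> 'a set \<Rightarrow> ennreal" where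
  "pair_count G U V = ecount G (U \<times> V)"

definition admissible_pair :: "('a::euclidean_space) set \<Rightarrow> 'a set \<Rightarrow> bool" where
  "admissible_pair U V \<longleftrightarrow> U \<in> sets lebesgue \<and> V \<in> sets lebesgue \<and>
     (emeasure lebesgue U < \<infinity> \<or> emeasure lebesgue V < \<infinity>)"

definition triple_space :: "(('a::euclidean_space) \<times> 'a) set measure" where
  "triple_space = sigma UNIV
     {{G. pair_count G U V \<in> A} | U V A. admissible_pair U V \<and> A \<in> sets (borel :: ennreal measure)}"

definition lattice :: "('a::euclidean_space) set" where
  "lattice = {z. \<forall>i\<in>Basis. z \<bullet> i \<in> \<int>}"

(* Shift of the triple by z: ({z+X},{z+Y},T(.-z)+z), on graphs. *)
definition shift_graph :: "('a::euclidean_space) \<Rightarrow> ('a \<times> 'a) set \<Rightarrow> ('a \<times> 'a) set" where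
  "shift_graph z G = (\<lambda>(x, y). (z + x, z + y)) ` G"

definition cyclically_monotone :: "('a::euclidean_space) set \<Rightarrow> ('a \<Rightarrow> 'a) \<Rightarrow> bool" where
  "cyclically_monotone Xs T \<longleftrightarrow>
     (\<forall>xs. xs \<noteq> [] \<longrightarrow> distinct xs \<longrightarrow> set xs \<subseteq> Xs \<longrightarrow>
        (\<Sum>n<length xs. T (xs ! n) \<bullet> (xs ! n - xs ! ((n + length xs - 1) mod length xs))) \<ge> 0)"

definition stationary_triple :: "'w measure \<Rightarrow> ('w \<Rightarrow> (('a::euclidean_space) \<times> 'a) set) \<Rightarrow> bool" where
  "stationary_triple M G \<longleftrightarrow>
     (\<forall>z\<in>lattice. distr M triple_space (\<lambda>\<omega>. shift_graph z (G \<omega>)) = distr M triple_space G)"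

definition ergodic_triple :: "'w measure \<Rightarrow> ('w \<Rightarrow> (('a::euclidean_space) \<times> 'a) set) \<Rightarrow> bool" where
  "ergodic_triple M G \<longleftrightarrow>
     (\<forall>A\<in>sets triple_space. (\<forall>z\<in>lattice. \<forall>H. shift_graph z H \<in> A \<longleftrightarrow> H \<in> A) \<longrightarrow>
        measure M (G -` A \<inter> space M) = 0 \<or> measure M (G -` A \<inter> space M) = 1)"

end

theory Submission
  imports Defs
begin

(*
  Tile R^d by the unit cells u + [0,1)^d, u in Z^d, and let F_L(u) (escape_count) count the
  points X of the cell u whose partner T(X) lies outside that cell enlarged by L in every
  direction. A point of (-R,R)^d moving farther than d (L + 1) is counted in S_n (escape_sum), the
  sum of F_L over the (2n)^d cells of [-n,n)^d with n = ceil R; so it suffices that almost surely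
  S_n <= c (n + p)^d for all n >= p, where c = (epsilon/2)^d and p is random; the radius r is
  then 1 + p for the least such p.

  The Poisson count of a cell has finite mean, so E F_L(0) -> 0 by monotone convergence and we
  may fix L with 8^d E F_L(0) <= c/2. A Vitali-type covering of the lattice by cubes, averaged
  over lattice translates using stationarity, gives the maximal inequality
  c P(S_n > c n^d for some n >= 1) <= 8^d E F_L(0). Hence the event that S_n <= c (n + p)^d for
  some p and all n >= p has probability at least 1/2; it is invariant under lattice shifts, so by
  ergodicity it is almost sure.
*)

lemma ecount_eq: "ecount S B = (if finite (S \<inter> B) then of_nat (card (S \<inter> B)) else \<infinity>)"
  unfolding ecount_def by (rule emeasure_count_space) simp

lemma ecount_mono: "A \<subseteq> B \<Longrightarrow> ecount X A \<le> ecount X B"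
  unfolding ecount_def by (intro emeasure_mono) auto

lemma ecount_image:
  assumes "inj_on f (S \<inter> A)" and "f ` S \<inter> B = f ` (S \<inter> A)"
  shows "ecount (f ` S) B = ecount S A"
proof -
  have "finite (f ` (S \<inter> A)) \<longleftrightarrow> finite (S \<inter> A)" using assms(1) finite_image_iff by blast
  moreover have "card (f ` (S \<inter> A)) = card (S \<inter> A)" using assms(1) card_image by blast
  ultimately show ?thesis unfolding ecount_eq assms(2) by simp
qed

lemma pair_count_graph_of: "pair_count (graph_of X T) U V = ecount X {x\<in>U. T x \<in> V}"
proof -
  have "graph_of X T = (\<lambda>x. (x, T x)) ` X" unfolding graph_of_def by auto
  then show ?thesis unfolding pair_count_def
    by (simp only:) (rule ecount_image, auto simp: inj_on_def)
qed

lemma pair_count_shift_graph: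
  "pair_count (shift_graph z H) U V = pair_count H {x. z + x \<in> U} {y. z + y \<in> V}"
  unfolding pair_count_def shift_graph_def
  by (rule ecount_image) (auto simp: inj_on_def image_iff)

lemma shift_graph_add: "shift_graph z (shift_graph w H) = shift_graph (z + w) H"
  unfolding shift_graph_def by (auto simp: image_iff add.assoc)

lemma shift_graph_0: "shift_graph 0 H = H"
  unfolding shift_graph_def by auto

lemma lattice_0: "0 \<in> lattice"
  unfolding lattice_def by auto

lemma lattice_add: "z \<in> lattice \<Longrightarrow> w \<in> lattice \<Longrightarrow> z + w \<in> lattice"
  unfolding lattice_def by (auto simp: inner_add_left)

lemma lattice_uminus: "z \<in> lattice \<Longrightarrow> - z \<in> lattice"
  unfolding lattice_def by auto

lemma admissible_pair_boundedI:
  assumes "U \<in> sets borel" and "bounded U" and "V \<in> sets borel"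
  shows "admissible_pair U V"
proof -
  have "U \<in> sets lebesgue" "V \<in> sets lebesgue" using assms by auto
  moreover have "emeasure lebesgue U < \<infinity>"
    using bounded_set_imp_lmeasurable[OF assms(2) \<open>U \<in> sets lebesgue\<close>] unfolding fmeasurable_def by blast
  ultimately show ?thesis unfolding admissible_pair_def by simp
qed

lemma admissible_pair_translate:
  assumes "admissible_pair U V"
  shows "admissible_pair {x. z + x \<in> U} {y. z + y \<in> V}"
proof -
  have preimage: "{x. z + x \<in> A} = (\<lambda>x. - z + x) ` A" for A by force
  have "emeasure lebesgue {x. z + x \<in> A} = emeasure lebesgue A" for A
  proof -
    have "(\<lambda>x. 1 *\<^sub>R x + - z) ` A = {x. z + x \<in> A}" by force
    then show ?thesis using emeasure_lebesgue_affine[of 1 "- z" A] by simp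
  qed
  then show ?thesis using assms lebesgue_sets_translation unfolding admissible_pair_def preimage
    by metis
qed

lemma space_triple_space: "space triple_space = UNIV"
  unfolding triple_space_def by (simp add: space_measure_of_conv)

lemma measurable_pair_count:
  assumes "admissible_pair U V"
  shows "(\<lambda>H. pair_count H U V) \<in> borel_measurable triple_space"
proof (rule measurableI)
  fix A :: "ennreal set" assume "A \<in> sets borel"
  then show "(\<lambda>H. pair_count H U V) -` A \<inter> space triple_space \<in> sets triple_space"
    unfolding triple_space_def using assms
    by (subst sets_measure_of) (auto simp: vimage_def space_measure_of_conv intro!: sigma_sets.Basic)
qed simp

lemma measurable_ecount:
  assumes "B \<in> sets borel" and "bounded B"
  shows "(\<lambda>S. ecount S B) \<in> borel_measurable config_space"
proof (rule measurableI)
  fix A :: "ennreal set" assume "A \<in> sets borel"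
  then show "(\<lambda>S. ecount S B) -` A \<inter> space config_space \<in> sets config_space"
    unfolding config_space_def using assms
    by (subst sets_measure_of) (auto simp: vimage_def space_measure_of_conv intro!: sigma_sets.Basic)
qed simp

lemma measurable_triple_spaceI:
  assumes "\<And>U V. admissible_pair U V \<Longrightarrow> (\<lambda>\<omega>. pair_count (G \<omega>) U V) \<in> borel_measurable M"
  shows "G \<in> M \<rightarrow>\<^sub>M triple_space"
  unfolding triple_space_def
proof (rule measurable_measure_of)
  fix Y assume "Y \<in> {{G. pair_count G U V \<in> A} | U V A.
    admissible_pair (U :: 'a::euclidean_space set) V \<and> A \<in> sets (borel :: ennreal measure)}"
  then obtain U V A where Y: "Y = {G. pair_count G U V \<in> A}" "admissible_pair U V" "A \<in> sets borel"
    by blast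
  show "G -` Y \<inter> space M \<in> sets M"
    using measurable_sets[OF assms[OF Y(2)] Y(3)] by (simp add: Y(1) vimage_def)
qed auto

locale stationary_random_graph = prob_space M for M :: "'w measure" +
  fixes G :: "'w \<Rightarrow> ('a::euclidean_space \<times> 'a) set"
  assumes measurable_pair_count_G:
      "\<And>U V. admissible_pair U V \<Longrightarrow> (\<lambda>\<omega>. pair_count (G \<omega>) U V) \<in> borel_measurable M"
    and stationary: "stationary_triple M G"
begin

lemma measurable_G[measurable]: "G \<in> M \<rightarrow>\<^sub>M triple_space"
  by (rule measurable_triple_spaceI[OF measurable_pair_count_G])

lemma measurable_shift_G[measurable]: "(\<lambda>\<omega>. shift_graph z (G \<omega>)) \<in> M \<rightarrow>\<^sub>M triple_space"
  by (rule measurable_triple_spaceI)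
    (simp add: pair_count_shift_graph measurable_pair_count_G admissible_pair_translate)

lemma nn_integral_shift_G:
  assumes "z \<in> lattice" and [measurable]: "\<Phi> \<in> borel_measurable triple_space"
  shows "(\<integral>\<^sup>+\<omega>. \<Phi> (shift_graph z (G \<omega>)) \<partial>M) = (\<integral>\<^sup>+\<omega>. \<Phi> (G \<omega>) \<partial>M)"
proof -
  have "(\<integral>\<^sup>+\<omega>. \<Phi> (shift_graph z (G \<omega>)) \<partial>M)
      = integral\<^sup>N (distr M triple_space (\<lambda>\<omega>. shift_graph z (G \<omega>))) \<Phi>"
    by (simp add: nn_integral_distr)
  also have "\<dots> = integral\<^sup>N (distr M triple_space G) \<Phi>"
    using stationary assms(1) unfolding stationary_triple_def by simp
  also have "\<dots> = (\<integral>\<^sup>+\<omega>. \<Phi> (G \<omega>) \<partial>M)"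
    by (simp add: nn_integral_distr)
  finally show ?thesis .
qed

lemma nn_integral_indicator_shift_G:
  assumes "z \<in> lattice" and [measurable]: "A \<in> sets triple_space"
  shows "(\<integral>\<^sup>+\<omega>. indicator A (shift_graph z (G \<omega>)) \<partial>M) = emeasure M (G -` A \<inter> space M)"
proof -
  have "(\<integral>\<^sup>+\<omega>. indicator A (shift_graph z (G \<omega>)) \<partial>M) = (\<integral>\<^sup>+\<omega>. indicator A (G \<omega>) \<partial>M)"
    using assms(1) by (intro nn_integral_shift_G) measurable
  also have "\<dots> = (\<integral>\<^sup>+\<omega>. indicator (G -` A \<inter> space M) \<omega> \<partial>M)"
    by (intro nn_integral_cong) (simp split: split_indicator)
  also have "\<dots> = emeasure M (G -` A \<inter> space M)"
    by (intro nn_integral_indicator) measurable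
  finally show ?thesis .
qed

end

definition lattice_box :: "('a::euclidean_space \<Rightarrow> int) \<Rightarrow> ('a \<Rightarrow> int) \<Rightarrow> 'a set" where
  "lattice_box lo hi = {w \<in> lattice. \<forall>b\<in>Basis. lo b \<le> w \<bullet> b \<and> w \<bullet> b < hi b}"

lemma bij_betw_lattice_box:
  "bij_betw (\<lambda>f. \<Sum>b\<in>Basis. real_of_int (f b) *\<^sub>R b) (PiE Basis (\<lambda>b. {lo b..<hi b})) (lattice_box lo hi)"
proof (rule bij_betw_byWitness[where f'="\<lambda>w. restrict (\<lambda>b. \<lfloor>w \<bullet> b\<rfloor>) Basis"])
  show "\<forall>f\<in>PiE Basis (\<lambda>b. {lo b..<hi b}).
      restrict (\<lambda>b. \<lfloor>(\<Sum>b\<in>Basis. real_of_int (f b) *\<^sub>R b) \<bullet> b\<rfloor>) Basis = f"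
    by (auto simp: PiE_def extensional_def restrict_def fun_eq_iff)
  show "\<forall>w\<in>lattice_box lo hi. (\<Sum>b\<in>Basis. real_of_int (restrict (\<lambda>b. \<lfloor>w \<bullet> b\<rfloor>) Basis b) *\<^sub>R b) = w"
  proof
    fix w assume "w \<in> lattice_box lo hi"
    then have "\<forall>b\<in>Basis. w \<bullet> b \<in> \<int>" by (auto simp: lattice_box_def lattice_def)
    then have "(\<Sum>b\<in>Basis. real_of_int (restrict (\<lambda>b. \<lfloor>w \<bullet> b\<rfloor>) Basis b) *\<^sub>R b)
        = (\<Sum>b\<in>Basis. (w \<bullet> b) *\<^sub>R b)"
      by (intro sum.cong) auto
    then show "(\<Sum>b\<in>Basis. real_of_int (restrict (\<lambda>b. \<lfloor>w \<bullet> b\<rfloor>) Basis b) *\<^sub>R b) = w"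
      by (simp add: euclidean_representation)
  qed
  show "(\<lambda>f. \<Sum>b\<in>Basis. real_of_int (f b) *\<^sub>R b) ` PiE Basis (\<lambda>b. {lo b..<hi b}) \<subseteq> lattice_box lo hi"
    by (auto simp: lattice_box_def lattice_def PiE_def Pi_def)
  show "(\<lambda>w. restrict (\<lambda>b. \<lfloor>w \<bullet> b\<rfloor>) Basis) ` lattice_box lo hi \<subseteq> PiE Basis (\<lambda>b. {lo b..<hi b})"
    by (auto simp: lattice_box_def le_floor_iff floor_less_iff)
qed

lemma finite_lattice_box: "finite (lattice_box lo hi)"
proof -
  have "finite (PiE (Basis::'a::euclidean_space set) (\<lambda>b. {lo b..<hi b}))" by (intro finite_PiE) auto
  then show ?thesis using bij_betw_finite[OF bij_betw_lattice_box] by blast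
qed

lemma card_lattice_box: "card (lattice_box lo hi) = (\<Prod>b\<in>Basis. nat (hi b - lo b))"
  using bij_betw_same_card[OF bij_betw_lattice_box, symmetric] by (simp add: card_PiE)

definition lattice_cube :: "'a::euclidean_space \<Rightarrow> nat \<Rightarrow> 'a set" where
  "lattice_cube z n = {w \<in> lattice. \<forall>b\<in>Basis. z \<bullet> b - real n \<le> w \<bullet> b \<and> w \<bullet> b < z \<bullet> b + real n}"

lemma lattice_cube_subset_lattice: "lattice_cube z n \<subseteq> lattice"
  unfolding lattice_cube_def by auto

lemma lattice_cube_eq_box:
  assumes "z \<in> lattice"
  shows "lattice_cube z n = lattice_box (\<lambda>b. \<lfloor>z \<bullet> b\<rfloor> - int n) (\<lambda>b. \<lfloor>z \<bullet> b\<rfloor> + int n)"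
proof -
  have floor: "real_of_int \<lfloor>z \<bullet> b\<rfloor> = z \<bullet> b" if "b \<in> Basis" for b
    using assms that unfolding lattice_def by auto
  show ?thesis unfolding lattice_cube_def lattice_box_def by (auto simp: floor)
qed

lemma finite_lattice_cube: "z \<in> lattice \<Longrightarrow> finite (lattice_cube z n)"
  by (simp add: lattice_cube_eq_box finite_lattice_box)

lemma card_lattice_cube:
  fixes z :: "'a::euclidean_space"
  assumes "z \<in> lattice"
  shows "card (lattice_cube z n) = (2 * n) ^ DIM('a)"
proof -
  have "card (lattice_cube z n) = (\<Prod>b\<in>(Basis::'a set). 2 * n)"
    unfolding lattice_cube_eq_box[OF assms] card_lattice_box by (intro prod.cong) auto
  then show ?thesis by simp
qed

lemma center_in_lattice_cube: "1 \<le> n \<Longrightarrow> z \<in> lattice \<Longrightarrow> z \<in> lattice_cube z n"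
  unfolding lattice_cube_def by auto

lemma lattice_cube_translate:
  assumes "z \<in> lattice"
  shows "(\<lambda>u. u + z) ` lattice_cube 0 n = lattice_cube z n"
proof (intro equalityI subsetI)
  fix x assume "x \<in> (\<lambda>u. u + z) ` lattice_cube 0 n"
  then show "x \<in> lattice_cube z n"
    using assms by (auto simp: lattice_cube_def inner_add_left lattice_add)
next
  fix x assume "x \<in> lattice_cube z n"
  then have "x - z \<in> lattice_cube 0 n"
    using assms lattice_add[OF _ lattice_uminus] by (auto simp: lattice_cube_def inner_diff_left)
  then show "x \<in> (\<lambda>u. u + z) ` lattice_cube 0 n" by (intro image_eqI[of _ _ "x - z"]) auto
qed

lemma lattice_cube_subset_centered:
  assumes "\<forall>b\<in>Basis. \<bar>z \<bullet> b\<bar> \<le> real j"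
  shows "lattice_cube z n \<subseteq> lattice_cube 0 (n + j)"
  using assms unfolding lattice_cube_def by (auto; smt (verit))

lemma lattice_cube_subset_lattice_cube:
  assumes "z \<in> lattice_cube 0 K" and "n \<le> N"
  shows "lattice_cube z n \<subseteq> lattice_cube 0 (K + N)"
proof
  fix w assume w: "w \<in> lattice_cube z n"
  have "- real (K + N) \<le> w \<bullet> b \<and> w \<bullet> b < real (K + N)" if "b \<in> Basis" for b
  proof -
    have "z \<bullet> b - real n \<le> w \<bullet> b" "w \<bullet> b < z \<bullet> b + real n"
      "- real K \<le> z \<bullet> b" "z \<bullet> b < real K"
      using w assms(1) that unfolding lattice_cube_def by auto
    moreover have "real n \<le> real N" using assms(2) by simp
    ultimately show ?thesis by simp
  qed
  then show "w \<in> lattice_cube 0 (K + N)"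
    using w unfolding lattice_cube_def by simp
qed

lemma center_in_lattice_cube_double:
  assumes "p \<in> lattice_cube z n" and "p \<in> lattice_cube z0 r" and "n \<le> r" and "z \<in> lattice"
  shows "z \<in> lattice_cube z0 (2 * r)"
  using assms unfolding lattice_cube_def by (auto; smt (verit) of_nat_le_iff)

subsection \<open>A Vitali covering lemma for lattice cubes\<close>

lemma card_lattice_cubes_meeting:
  fixes z0 :: "'a::euclidean_space"
  assumes "E \<subseteq> lattice" and "\<forall>z\<in>E. rad z \<le> r" and "z0 \<in> lattice"
  shows "real (card {z\<in>E. lattice_cube z (rad z) \<inter> lattice_cube z0 r \<noteq> {}})
    \<le> 4 ^ DIM('a) * real r ^ DIM('a)"
proof -
  have "{z\<in>E. lattice_cube z (rad z) \<inter> lattice_cube z0 r \<noteq> {}} \<subseteq> lattice_cube z0 (2 * r)"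
    using assms center_in_lattice_cube_double by blast
  from card_mono[OF finite_lattice_cube[OF assms(3)] this]
  have "card {z\<in>E. lattice_cube z (rad z) \<inter> lattice_cube z0 r \<noteq> {}} \<le> (4 * r) ^ DIM('a)"
    by (simp add: card_lattice_cube[OF assms(3)])
  then have "real (card {z\<in>E. lattice_cube z (rad z) \<inter> lattice_cube z0 r \<noteq> {}}) \<le> real ((4 * r) ^ DIM('a))"
    by (rule of_nat_mono)
  then show ?thesis
    by (simp add: power_mult_distrib)
qed

lemma card_lattice_cubes_meeting_le:
  fixes g :: "'a::euclidean_space \<Rightarrow> ennreal" and c :: real
  assumes "E \<subseteq> lattice" and "\<forall>z\<in>E. rad z \<le> r" and "z0 \<in> lattice" and "c \<ge> 0"
    and "ennreal (c * real r ^ DIM('a)) \<le> (\<Sum>w\<in>lattice_cube z0 r. g w)"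
  shows "ennreal (c * card {z\<in>E. lattice_cube z (rad z) \<inter> lattice_cube z0 r \<noteq> {}})
    \<le> 4 ^ DIM('a) * (\<Sum>w\<in>lattice_cube z0 r. g w)"
proof -
  have "c * card {z\<in>E. lattice_cube z (rad z) \<inter> lattice_cube z0 r \<noteq> {}}
      \<le> c * (4 ^ DIM('a) * real r ^ DIM('a))"
    using mult_left_mono[OF card_lattice_cubes_meeting[OF assms(1-3)] assms(4)] .
  also have "\<dots> = 4 ^ DIM('a) * (c * real r ^ DIM('a))"
    by (rule mult.left_commute)
  finally have "ennreal (c * card {z\<in>E. lattice_cube z (rad z) \<inter> lattice_cube z0 r \<noteq> {}})
      \<le> ennreal (4 ^ DIM('a) * (c * real r ^ DIM('a)))"
    by (rule ennreal_leI)
  also have "\<dots> = 4 ^ DIM('a) * ennreal (c * real r ^ DIM('a))"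
    using assms(4) by (simp add: ennreal_mult ennreal_power[symmetric])
  also have "\<dots> \<le> 4 ^ DIM('a) * (\<Sum>w\<in>lattice_cube z0 r. g w)"
    using assms(5) by (rule mult_left_mono) simp
  finally show ?thesis .
qed

lemma lattice_cube_covering:
  fixes g :: "'a::euclidean_space \<Rightarrow> ennreal" and rad :: "'a \<Rightarrow> nat" and c :: real
  assumes "finite E" and "E \<subseteq> lattice" and "\<forall>z\<in>E. 1 \<le> rad z" and "c \<ge> 0"
    and "\<forall>z\<in>E. ennreal (c * real (rad z) ^ DIM('a)) \<le> (\<Sum>w\<in>lattice_cube z (rad z). g w)"
  shows "ennreal (c * card E) \<le> 4 ^ DIM('a) * (\<Sum>w\<in>(\<Union>z\<in>E. lattice_cube z (rad z)). g w)"
  using assms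
proof (induction "card E" arbitrary: E rule: less_induct)
  case less
  let ?U = "\<lambda>E. \<Union>z\<in>E. lattice_cube z (rad z)"
  show ?case
  proof (cases "E = {}")
    case False
    \<comment> \<open>Greedy step: take a cube of maximal radius and discard every cube meeting it.\<close>
    define r where "r = Max (rad ` E)"
    have "r \<in> rad ` E" unfolding r_def using False less.prems(1) by (intro Max_in) auto
    then obtain z0 where z0: "z0 \<in> E" "rad z0 = r" by blast
    have rmax: "\<forall>z\<in>E. rad z \<le> r" unfolding r_def using less.prems(1) by auto
    have z0L: "z0 \<in> lattice" and r1: "1 \<le> r" using z0 less.prems(2,3) by auto
    define D where "D = {z\<in>E. lattice_cube z (rad z) \<inter> lattice_cube z0 r \<noteq> {}}"
    have "z0 \<in> D" and "D \<subseteq> E"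
      unfolding D_def using z0 center_in_lattice_cube[OF r1 z0L] by auto
    then have cardE: "card E = card D + card (E - D)"
      using less.prems(1) by (metis card_Diff_subset card_mono finite_subset le_add_diff_inverse)
    have smaller: "card (E - D) < card E"
      using \<open>z0 \<in> D\<close> \<open>D \<subseteq> E\<close> less.prems(1) by (intro psubset_card_mono) auto
    have D_bound: "ennreal (c * card D) \<le> 4 ^ DIM('a) * (\<Sum>w\<in>lattice_cube z0 r. g w)"
      unfolding D_def using less.prems(2,4,5) rmax z0 z0L by (intro card_lattice_cubes_meeting_le) auto
    have IH: "ennreal (c * card (E - D)) \<le> 4 ^ DIM('a) * (\<Sum>w\<in>?U (E - D). g w)"
      using less.hyps[OF smaller] less.prems by auto
    have "ennreal (c * card E) = ennreal (c * card D) + ennreal (c * card (E - D))"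
      using less.prems(4) by (simp add: cardE distrib_left ennreal_plus)
    also have "\<dots> \<le> 4 ^ DIM('a) * (\<Sum>w\<in>lattice_cube z0 r. g w) + 4 ^ DIM('a) * (\<Sum>w\<in>?U (E - D). g w)"
      using D_bound IH by (rule add_mono)
    also have "\<dots> = 4 ^ DIM('a) * (\<Sum>w\<in>lattice_cube z0 r \<union> ?U (E - D). g w)"
      using less.prems(1,2) z0L
      by (subst sum.union_disjoint) (auto simp: D_def distrib_left finite_lattice_cube)
    also have "\<dots> \<le> 4 ^ DIM('a) * (\<Sum>w\<in>?U E. g w)"
      using less.prems(1,2) z0 finite_lattice_cube
      by (intro mult_left_mono sum_mono2) (auto simp: finite_lattice_cube)
    finally show ?thesis .
  qed simp
qed

definition unit_cell :: "'a::euclidean_space \<Rightarrow> 'a set" where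
  "unit_cell u = {x. \<forall>b\<in>Basis. u \<bullet> b \<le> x \<bullet> b \<and> x \<bullet> b < u \<bullet> b + 1}"

definition cell_nbhd :: "nat \<Rightarrow> 'a::euclidean_space \<Rightarrow> 'a set" where
  "cell_nbhd L u = {y. \<forall>b\<in>Basis. u \<bullet> b - real L \<le> y \<bullet> b \<and> y \<bullet> b < u \<bullet> b + real L + 1}"

definition escape_count :: "nat \<Rightarrow> 'a::euclidean_space \<Rightarrow> ('a \<times> 'a) set \<Rightarrow> ennreal" where
  "escape_count L u H = pair_count H (unit_cell u) (- cell_nbhd L u)"

definition escape_sum :: "nat \<Rightarrow> nat \<Rightarrow> ('a::euclidean_space \<times> 'a) set \<Rightarrow> ennreal" where
  "escape_sum L n H = (\<Sum>u\<in>lattice_cube 0 n. escape_count L u H)"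

lemma bounded_unit_cell: "bounded (unit_cell u)"
proof -
  have "unit_cell u \<subseteq> cbox u (u + One)"
    by (auto simp: unit_cell_def mem_box inner_add_left less_imp_le)
  then show ?thesis using bounded_cbox bounded_subset by blast
qed

lemma admissible_pair_escape: "admissible_pair (unit_cell u) (- cell_nbhd L u)"
proof -
  have "unit_cell u \<in> sets borel" "cell_nbhd L u \<in> sets borel"
    unfolding unit_cell_def cell_nbhd_def by measurable
  then show ?thesis by (intro admissible_pair_boundedI bounded_unit_cell borel_comp)
qed

lemma escape_count_shift_graph: "escape_count L u (shift_graph z H) = escape_count L (u - z) H"
proof -
  have "{x. z + x \<in> unit_cell u} = unit_cell (u - z)"
    by (auto simp: unit_cell_def inner_diff_left inner_add_left)
  moreover have "{y. z + y \<in> - cell_nbhd L u} = - cell_nbhd L (u - z)"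
    unfolding cell_nbhd_def by (auto simp: inner_diff_left inner_add_left; smt (verit))
  ultimately show ?thesis unfolding escape_count_def pair_count_shift_graph by simp
qed

lemma measurable_escape_count[measurable]: "escape_count L u \<in> borel_measurable triple_space"
  unfolding escape_count_def[abs_def] by (rule measurable_pair_count[OF admissible_pair_escape])

lemma measurable_escape_sum[measurable]: "escape_sum L n \<in> borel_measurable triple_space"
  unfolding escape_sum_def[abs_def] by measurable

lemma escape_sum_shift_graph:
  assumes "z \<in> lattice"
  shows "escape_sum L n (shift_graph (- z) H) = (\<Sum>w\<in>lattice_cube z n. escape_count L w H)"
proof -
  have "escape_sum L n (shift_graph (- z) H) = (\<Sum>u\<in>lattice_cube 0 n. escape_count L (u + z) H)"
    unfolding escape_sum_def escape_count_shift_graph by simp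
  also have "\<dots> = (\<Sum>w\<in>(\<lambda>u. u + z) ` lattice_cube 0 n. escape_count L w H)"
    by (subst sum.reindex) (auto simp: inj_on_def)
  finally show ?thesis unfolding lattice_cube_translate[OF assms] .
qed

lemma escape_sum_shift_graph_le:
  assumes "z \<in> lattice" and "\<forall>b\<in>Basis. \<bar>z \<bullet> b\<bar> \<le> real j"
  shows "escape_sum L n (shift_graph z H) \<le> escape_sum L (n + j) H"
proof -
  have "escape_sum L n (shift_graph z H) = (\<Sum>w\<in>lattice_cube (- z) n. escape_count L w H)"
    using escape_sum_shift_graph[OF lattice_uminus[OF assms(1)]] by simp
  also have "\<dots> \<le> escape_sum L (n + j) H"
    unfolding escape_sum_def using assms(2)
    by (intro sum_mono2 finite_lattice_cube lattice_0 lattice_cube_subset_centered) auto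
  finally show ?thesis .
qed

subsection \<open>The maximal inequality\<close>

definition escape_exceeds :: "nat \<Rightarrow> real \<Rightarrow> nat \<Rightarrow> ('a::euclidean_space \<times> 'a) set set" where
  "escape_exceeds L c N = {H. \<exists>n\<in>{1..N}. ennreal (c * real n ^ DIM('a)) < escape_sum L n H}"

lemma sets_escape_exceeds[measurable]:
  "(escape_exceeds L c N :: ('a::euclidean_space \<times> 'a) set set) \<in> sets triple_space"
proof -
  have "(escape_exceeds L c N :: ('a \<times> 'a) set set) = (\<Union>n\<in>{1..N}.
      escape_sum L n -` {ennreal (c * real n ^ DIM('a))<..} \<inter> space triple_space)"
    by (auto simp: escape_exceeds_def space_triple_space)
  then show ?thesis
    by (simp only:) (intro sets.finite_UN finite_atLeastAtMost ballI measurable_sets[OF measurable_escape_sum], auto)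
qed

lemma escape_exceeds_covering:
  fixes H :: "('a::euclidean_space \<times> 'a) set"
  assumes "c > 0"
  shows "ennreal c * (\<Sum>z\<in>lattice_cube 0 K. indicator (escape_exceeds L c N) (shift_graph (- z) H))
    \<le> 4 ^ DIM('a) * (\<Sum>w\<in>lattice_cube 0 (K + N). escape_count L w H)"
proof -
  define E where "E = {z \<in> lattice_cube 0 K. shift_graph (- z) H \<in> escape_exceeds L c N}"
  define P where "P z n \<longleftrightarrow> n \<in> {1..N} \<and>
    ennreal (c * real n ^ DIM('a)) < (\<Sum>w\<in>lattice_cube z n. escape_count L w H)" for z n
  define rad where "rad z = (SOME n. P z n)" for z
  have E_cube: "E \<subseteq> lattice_cube 0 K" and E_lattice: "E \<subseteq> lattice"
    unfolding E_def using lattice_cube_subset_lattice by auto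
  have finite_E: "finite E"
    using E_cube finite_lattice_cube[OF lattice_0] finite_subset by blast
  have rad: "P z (rad z)" if "z \<in> E" for z
  proof -
    have "z \<in> lattice" using that E_lattice by blast
    then have "\<exists>n. P z n"
      using that unfolding E_def P_def escape_exceeds_def by (auto simp: escape_sum_shift_graph)
    then show ?thesis unfolding rad_def by (rule someI_ex)
  qed
  have "(\<Sum>z\<in>lattice_cube 0 K. indicator (escape_exceeds L c N) (shift_graph (- z) H)) = (of_nat (card E) :: ennreal)"
    unfolding E_def by (simp add: indicator_def finite_lattice_cube lattice_0 Int_def)
  then have lhs: "ennreal c * (\<Sum>z\<in>lattice_cube 0 K. indicator (escape_exceeds L c N) (shift_graph (- z) H))
      = ennreal (c * card E)"
    using assms by (simp add: ennreal_mult ennreal_of_nat_eq_real_of_nat)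
  have "lattice_cube z (rad z) \<subseteq> lattice_cube 0 (K + N)" if "z \<in> E" for z
    using rad[OF that] E_cube that unfolding P_def by (intro lattice_cube_subset_lattice_cube) auto
  then have "(\<Sum>w\<in>(\<Union>z\<in>E. lattice_cube z (rad z)). escape_count L w H)
      \<le> (\<Sum>w\<in>lattice_cube 0 (K + N). escape_count L w H)"
    by (intro sum_mono2 finite_lattice_cube lattice_0) auto
  moreover have "ennreal (c * card E)
      \<le> 4 ^ DIM('a) * (\<Sum>w\<in>(\<Union>z\<in>E. lattice_cube z (rad z)). escape_count L w H)"
    using rad assms unfolding P_def
    by (intro lattice_cube_covering finite_E E_lattice) (auto intro: less_imp_le)
  ultimately show ?thesis unfolding lhs by (meson mult_left_mono order.trans zero_le)
qed

context stationary_random_graph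
begin

lemma nn_integral_escape_count_G:
  assumes "w \<in> lattice"
  shows "(\<integral>\<^sup>+\<omega>. escape_count L w (G \<omega>) \<partial>M) = (\<integral>\<^sup>+\<omega>. escape_count L 0 (G \<omega>) \<partial>M)"
  using nn_integral_shift_G[OF lattice_uminus[OF assms], of "escape_count L 0"]
  by (simp add: escape_count_shift_graph)

lemma maximal_inequality:
  assumes "c > 0"
  shows "ennreal c * emeasure M (G -` escape_exceeds L c N \<inter> space M)
    \<le> 8 ^ DIM('a) * (\<integral>\<^sup>+\<omega>. escape_count L 0 (G \<omega>) \<partial>M)"
proof (cases "N = 0")
  case True
  then show ?thesis by (simp add: escape_exceeds_def)
next
  case False
  let ?P = "emeasure M (G -` escape_exceeds L c N \<inter> space M)"
  let ?I = "\<integral>\<^sup>+\<omega>. escape_count L 0 (G \<omega>) \<partial>M"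
  let ?k = "of_nat ((2 * N) ^ DIM('a)) :: ennreal"
  note in_lattice = lattice_cube_subset_lattice[THEN subsetD]
  have card_double: "card (lattice_cube (0::'a) (N + N)) = 2 ^ DIM('a) * (2 * N) ^ DIM('a)"
  proof -
    have "2 * (N + N) = 2 * (2 * N)" by simp
    then show ?thesis unfolding card_lattice_cube[OF lattice_0] by (simp only: power_mult_distrib)
  qed
  have eight: "(8::ennreal) ^ DIM('a) = 4 ^ DIM('a) * 2 ^ DIM('a)"
    by (simp flip: power_mult_distrib)
  \<comment> \<open>Average the pointwise covering bound over the translates by the points of
      \<open>lattice_cube 0 N\<close>; by stationarity each translate has the same distribution.\<close>
  have "?k * (ennreal c * ?P) = ennreal c * (\<Sum>z\<in>lattice_cube 0 N.
      \<integral>\<^sup>+\<omega>. indicator (escape_exceeds L c N) (shift_graph (- z) (G \<omega>)) \<partial>M)"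
    by (simp add: nn_integral_indicator_shift_G in_lattice lattice_uminus
        card_lattice_cube[OF lattice_0] mult_ac)
  also have "\<dots> = (\<integral>\<^sup>+\<omega>. ennreal c * (\<Sum>z\<in>lattice_cube 0 N.
      indicator (escape_exceeds L c N) (shift_graph (- z) (G \<omega>))) \<partial>M)"
    by (simp add: nn_integral_cmult nn_integral_sum)
  also have "\<dots> \<le> (\<integral>\<^sup>+\<omega>. 4 ^ DIM('a) * (\<Sum>w\<in>lattice_cube 0 (N + N). escape_count L w (G \<omega>)) \<partial>M)"
    by (intro nn_integral_mono escape_exceeds_covering assms)
  also have "\<dots> = 4 ^ DIM('a) * (\<Sum>w\<in>lattice_cube 0 (N + N). \<integral>\<^sup>+\<omega>. escape_count L w (G \<omega>) \<partial>M)"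
    by (simp add: nn_integral_cmult nn_integral_sum)
  also have "\<dots> = 4 ^ DIM('a) * (of_nat (card (lattice_cube (0::'a) (N + N))) * ?I)"
    by (simp add: nn_integral_escape_count_G in_lattice)
  also have "\<dots> = ?k * (8 ^ DIM('a) * ?I)"
    unfolding card_double eight by (simp add: mult_ac)
  finally have "?k * (ennreal c * ?P) \<le> ?k * (8 ^ DIM('a) * ?I)" .
  moreover have "?k \<noteq> 0" using False by simp
  moreover have "?k \<noteq> top" by (rule ennreal_of_nat_neq_top)
  ultimately show ?thesis using ennreal_mult_le_mult_iff by blast
qed

lemma emeasure_escape_exceeds_le_half:
  assumes "c > 0"
    and "(\<integral>\<^sup>+\<omega>. escape_count L 0 (G \<omega>) \<partial>M) \<le> ennreal (c / (2 * 8 ^ DIM('a)))"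
  shows "emeasure M (G -` escape_exceeds L c N \<inter> space M) \<le> ennreal (1 / 2)"
proof -
  have "ennreal c * emeasure M (G -` escape_exceeds L c N \<inter> space M)
      \<le> 8 ^ DIM('a) * (\<integral>\<^sup>+\<omega>. escape_count L 0 (G \<omega>) \<partial>M)"
    by (rule maximal_inequality[OF assms(1)])
  also have "\<dots> \<le> 8 ^ DIM('a) * ennreal (c / (2 * 8 ^ DIM('a)))"
    by (rule mult_left_mono[OF assms(2)]) simp
  also have "\<dots> = ennreal (8 ^ DIM('a)) * ennreal (c / (2 * 8 ^ DIM('a)))"
    by (subst ennreal_power[symmetric]) auto
  also have "\<dots> = ennreal (8 ^ DIM('a) * (c / (2 * 8 ^ DIM('a))))"
    using assms(1) by (intro ennreal_mult[symmetric]) auto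
  also have "\<dots> = ennreal c * ennreal (1 / 2)"
    using assms(1) by (subst ennreal_mult[symmetric]) auto
  finally show ?thesis
    using assms(1) by (subst (asm) ennreal_mult_le_mult_iff) auto
qed

lemma prob_escape_exceeds_le_half:
  assumes "c > 0"
    and "(\<integral>\<^sup>+\<omega>. escape_count L 0 (G \<omega>) \<partial>M) \<le> ennreal (c / (2 * 8 ^ DIM('a)))"
  shows "prob (\<Union>N. G -` escape_exceeds L c N \<inter> space M) \<le> 1 / 2"
proof -
  have "emeasure M (\<Union>N. G -` escape_exceeds L c N \<inter> space M)
      = (SUP N. emeasure M (G -` escape_exceeds L c N \<inter> space M))"
    by (intro SUP_emeasure_incseq[symmetric]) (auto simp: incseq_def escape_exceeds_def)
  also have "\<dots> \<le> ennreal (1 / 2)"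
    by (intro SUP_least emeasure_escape_exceeds_le_half assms)
  finally have "ennreal (prob (\<Union>N. G -` escape_exceeds L c N \<inter> space M)) \<le> ennreal (1 / 2)"
    by (simp only: emeasure_eq_measure)
  then show ?thesis
    by (subst (asm) ennreal_le_iff) auto
qed

end

subsection \<open>Ergodicity\<close>

definition escape_bounded_from :: "nat \<Rightarrow> real \<Rightarrow> nat \<Rightarrow> ('a::euclidean_space \<times> 'a) set \<Rightarrow> bool" where
  "escape_bounded_from L c p H \<longleftrightarrow> (\<forall>n\<ge>p. escape_sum L n H \<le> ennreal (c * real (n + p) ^ DIM('a)))"

lemma measurable_escape_bounded_from[measurable]:
  "escape_bounded_from L c p \<in> measurable triple_space (count_space UNIV)"
  unfolding escape_bounded_from_def by measurable

lemma escape_bounded_from_shift_graph: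
  assumes "z \<in> lattice" and "escape_bounded_from L c p H"
  shows "\<exists>q. escape_bounded_from L c q (shift_graph z H)"
proof -
  define j where "j = nat \<lceil>norm z\<rceil>"
  have j: "\<forall>b\<in>Basis. \<bar>z \<bullet> b\<bar> \<le> real j"
    unfolding j_def using Basis_le_norm by (meson real_nat_ceiling_ge order.trans)
  have "escape_bounded_from L c (p + j) (shift_graph z H)"
    unfolding escape_bounded_from_def
  proof (intro allI impI)
    fix n assume "p + j \<le> n"
    have "escape_sum L n (shift_graph z H) \<le> escape_sum L (n + j) H"
      by (rule escape_sum_shift_graph_le[OF assms(1) j])
    also have "\<dots> \<le> ennreal (c * real (n + j + p) ^ DIM('a))"
      using assms(2) \<open>p + j \<le> n\<close> unfolding escape_bounded_from_def by (metis le_add1 order.trans)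
    finally show "escape_sum L n (shift_graph z H) \<le> ennreal (c * real (n + (p + j)) ^ DIM('a))"
      by (simp add: ac_simps)
  qed
  then show ?thesis ..
qed

lemma ex_escape_bounded_from_shift_graph_iff:
  assumes "z \<in> lattice"
  shows "(\<exists>p. escape_bounded_from L c p (shift_graph z H)) \<longleftrightarrow> (\<exists>p. escape_bounded_from L c p H)"
  using escape_bounded_from_shift_graph[OF assms, of L c _ H]
    escape_bounded_from_shift_graph[OF lattice_uminus[OF assms], of L c _ "shift_graph z H"]
  by (auto simp: shift_graph_add shift_graph_0)

lemma sets_ex_escape_bounded_from:
  "{H :: ('a::euclidean_space \<times> 'a) set. \<exists>p. escape_bounded_from L c p H} \<in> sets triple_space"
proof -
  have "{H \<in> space triple_space. \<exists>p. escape_bounded_from L c p (H :: ('a \<times> 'a) set)}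
      \<in> sets triple_space"
    by measurable
  then show ?thesis by (simp add: space_triple_space)
qed

lemma escape_bounded_from_1_if_not_exceeds:
  assumes "c \<ge> 0" and "\<forall>N. H \<notin> escape_exceeds L c N"
  shows "escape_bounded_from L c 1 H"
  unfolding escape_bounded_from_def
proof (intro allI impI)
  fix n :: nat assume "1 \<le> n"
  then have "escape_sum L n H \<le> ennreal (c * real n ^ DIM('a))"
    using assms(2) unfolding escape_exceeds_def by (force simp: not_less)
  also have "\<dots> \<le> ennreal (c * real (n + 1) ^ DIM('a))"
    using assms(1) by (intro ennreal_leI mult_left_mono power_mono) auto
  finally show "escape_sum L n H \<le> ennreal (c * real (n + 1) ^ DIM('a))" .
qed

lemma (in stationary_random_graph) AE_ex_escape_bounded_from:
  assumes "ergodic_triple M G" and "c > 0"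
    and "(\<integral>\<^sup>+\<omega>. escape_count L 0 (G \<omega>) \<partial>M) \<le> ennreal (c / (2 * 8 ^ DIM('a)))"
  shows "AE \<omega> in M. \<exists>p. escape_bounded_from L c p (G \<omega>)"
proof -
  define Good where "Good = G -` {H. \<exists>p. escape_bounded_from L c p H} \<inter> space M"
  define Exc where "Exc = (\<Union>N. G -` escape_exceeds L c N \<inter> space M)"
  have "Exc \<in> sets M"
    unfolding Exc_def by measurable
  have "space M - Exc \<subseteq> Good"
    using escape_bounded_from_1_if_not_exceeds[of c] assms(2) unfolding Exc_def Good_def by fastforce
  then have "prob (space M - Exc) \<le> prob Good"
    by (intro finite_measure_mono) (simp_all add: Good_def)
  moreover have "prob (space M - Exc) = 1 - prob Exc"
    using \<open>Exc \<in> sets M\<close> by (rule prob_compl)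
  moreover have "prob Exc \<le> 1 / 2"
    unfolding Exc_def by (rule prob_escape_exceeds_le_half[OF assms(2,3)])
  ultimately have "prob Good \<noteq> 0" by linarith
  moreover have "prob Good = 0 \<or> prob Good = 1"
    unfolding Good_def
    by (rule assms(1)[unfolded ergodic_triple_def, rule_format, OF sets_ex_escape_bounded_from])
      (simp add: ex_escape_bounded_from_shift_graph_iff)
  ultimately have "AE \<omega> in M. \<omega> \<in> Good"
    by (intro AE_prob_1) simp
  then show ?thesis
    unfolding Good_def by (rule AE_mp) (intro AE_I2 impI, simp)
qed

subsection \<open>Finite mean escape counts\<close>

lemma nn_integral_nat_valued:
  assumes [measurable]: "f \<in> borel_measurable M" and "AE \<omega> in M. f \<omega> \<in> range of_nat"
  shows "(\<integral>\<^sup>+\<omega>. f \<omega> \<partial>M) = (\<Sum>n. of_nat n * emeasure M {\<omega> \<in> space M. f \<omega> = of_nat n})"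
proof -
  have "AE \<omega> in M. f \<omega> = (\<Sum>n. of_nat n * indicator {\<omega> \<in> space M. f \<omega> = of_nat n} \<omega>)"
    using assms(2)
  proof (rule AE_mp, intro AE_I2 impI)
    fix \<omega> assume "\<omega> \<in> space M" and "f \<omega> \<in> range of_nat"
    then obtain k where k: "f \<omega> = of_nat k" "\<omega> \<in> space M" by blast
    then have "(\<lambda>n. of_nat n * indicator {\<omega> \<in> space M. f \<omega> = of_nat n} \<omega> :: ennreal)
        = (\<lambda>n. if n = k then of_nat k else 0)"
      by (auto simp: indicator_def)
    then show "f \<omega> = (\<Sum>n. of_nat n * indicator {\<omega> \<in> space M. f \<omega> = of_nat n} \<omega>)"
      using k sums_single[of k "\<lambda>n. of_nat n :: ennreal"] sums_unique by (simp cong: if_cong)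
  qed
  then have "(\<integral>\<^sup>+\<omega>. f \<omega> \<partial>M)
      = (\<integral>\<^sup>+\<omega>. (\<Sum>n. of_nat n * indicator {\<omega> \<in> space M. f \<omega> = of_nat n} \<omega>) \<partial>M)"
    by (rule nn_integral_cong_AE)
  also have "\<dots> = (\<Sum>n. \<integral>\<^sup>+\<omega>. of_nat n * indicator {\<omega> \<in> space M. f \<omega> = of_nat n} \<omega> \<partial>M)"
    by (rule nn_integral_suminf) measurable
  also have "\<dots> = (\<Sum>n. of_nat n * emeasure M {\<omega> \<in> space M. f \<omega> = of_nat n})"
    by (subst nn_integral_cmult_indicator) measurable
  finally show ?thesis .
qed

lemma nn_integral_ecount_poisson_finite:
  fixes Xs :: "'w \<Rightarrow> 'a::euclidean_space set"
  assumes "prob_space M" and "unit_poisson_pp M Xs" and "B \<in> sets borel" and "bounded B"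
  shows "(\<integral>\<^sup>+\<omega>. ecount (Xs \<omega>) B \<partial>M) < \<infinity>"
proof -
  interpret prob_space M by (rule assms(1))
  define m where "m = measure lborel B"
  have "0 \<le> m" unfolding m_def by simp
  have [measurable]: "Xs \<in> M \<rightarrow>\<^sub>M config_space"
    using assms(2) unfolding unit_poisson_pp_def by blast
  note measurable_ecount[OF assms(3,4), measurable]
  have "AE \<omega> in M. finite (Xs \<omega> \<inter> B)"
    using assms(2,4) unfolding unit_poisson_pp_def by (auto elim!: AE_mp)
  then have "AE \<omega> in M. ecount (Xs \<omega>) B \<in> range of_nat"
    by (rule AE_mp) (intro AE_I2 impI, simp add: ecount_eq)
  then have "(\<integral>\<^sup>+\<omega>. ecount (Xs \<omega>) B \<partial>M)
      = (\<Sum>n. of_nat n * emeasure M {\<omega> \<in> space M. ecount (Xs \<omega>) B = of_nat n})"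
    by (intro nn_integral_nat_valued) measurable
  also have "\<dots> = (\<Sum>n. of_nat n * ennreal (exp (- m) * m ^ n / fact n))"
    using assms(2-4) unfolding unit_poisson_pp_def m_def by (simp add: emeasure_eq_measure)
  also have "\<dots> \<le> (\<Sum>n. ennreal (inverse (fact n) * (2 * m) ^ n))"
  proof (intro suminf_le summableI)
    fix n :: nat
    \<comment> \<open>Since \<open>n \<le> 2 ^ n\<close> and \<open>exp (- m) \<le> 1\<close>, the mean is dominated by the
        exponential series at \<open>2 m\<close>.\<close>
    have "real n * (exp (- m) * m ^ n / fact n) \<le> 2 ^ n * (1 * m ^ n / fact n)"
      using \<open>0 \<le> m\<close> less_exp[of n] by (intro mult_mono divide_right_mono) (auto intro: less_imp_le)
    also have "\<dots> = inverse (fact n) * (2 * m) ^ n" by (simp add: power_mult_distrib field_simps)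
    finally have "ennreal (real n * (exp (- m) * m ^ n / fact n)) \<le> ennreal (inverse (fact n) * (2 * m) ^ n)"
      by (rule ennreal_leI)
    moreover have "of_nat n * ennreal (exp (- m) * m ^ n / fact n) = ennreal (real n * (exp (- m) * m ^ n / fact n))"
      by (subst ennreal_mult) (use \<open>0 \<le> m\<close> in \<open>auto simp: ennreal_of_nat_eq_real_of_nat\<close>)
    ultimately show "of_nat n * ennreal (exp (- m) * m ^ n / fact n) \<le> ennreal (inverse (fact n) * (2 * m) ^ n)"
      by simp
  qed
  also have "\<dots> = ennreal (\<Sum>n. inverse (fact n) * (2 * m) ^ n)"
    by (rule suminf_ennreal2) (use \<open>0 \<le> m\<close> summable_exp[of "2 * m"] in \<open>simp_all del: power_mult_distrib\<close>)
  also have "\<dots> < \<infinity>" by simp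
  finally show ?thesis .
qed

lemma ex_escape_count_graph_of_eq_0:
  assumes "finite (X \<inter> unit_cell u)"
  shows "\<exists>L. escape_count L u (graph_of X T) = 0"
proof -
  define K where "K = nat \<lceil>Max (insert 0 ((\<lambda>(x, b). \<bar>(T x - u) \<bullet> b\<bar>) ` ((X \<inter> unit_cell u) \<times> Basis)))\<rceil>"
  have K: "\<bar>(T x - u) \<bullet> b\<bar> \<le> real K" if "x \<in> X \<inter> unit_cell u" and "b \<in> Basis" for x b
  proof -
    have "\<bar>(T x - u) \<bullet> b\<bar> \<le> Max (insert 0 ((\<lambda>(x, b). \<bar>(T x - u) \<bullet> b\<bar>) ` ((X \<inter> unit_cell u) \<times> Basis)))"
      using assms that by (intro Max_ge) force+
    then show ?thesis unfolding K_def by linarith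
  qed
  have "T x \<in> cell_nbhd K u" if "x \<in> X \<inter> unit_cell u" for x
    using K[OF that] by (force simp: cell_nbhd_def abs_le_iff inner_diff_left)
  then have "X \<inter> {x \<in> unit_cell u. T x \<in> - cell_nbhd K u} = {}" by blast
  then have "escape_count K u (graph_of X T) = 0"
    unfolding escape_count_def pair_count_graph_of ecount_def by simp
  then show ?thesis ..
qed

lemma INF_nn_integral_escape_count_eq_0:
  fixes Xs :: "'w \<Rightarrow> 'a::euclidean_space set" and T :: "'w \<Rightarrow> 'a \<Rightarrow> 'a"
  assumes "prob_space M" and "unit_poisson_pp M Xs"
    and "\<And>U V. admissible_pair U V \<Longrightarrow>
           (\<lambda>\<omega>. pair_count (graph_of (Xs \<omega>) (T \<omega>)) U V) \<in> borel_measurable M"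
  shows "(INF L. \<integral>\<^sup>+\<omega>. escape_count L u (graph_of (Xs \<omega>) (T \<omega>)) \<partial>M) = 0"
proof -
  interpret prob_space M by (rule assms(1))
  define f where "f L \<omega> = escape_count L u (graph_of (Xs \<omega>) (T \<omega>))" for L \<omega>
  have f_eq: "f L \<omega> = ecount (Xs \<omega>) {x \<in> unit_cell u. T \<omega> x \<in> - cell_nbhd L u}" for L \<omega>
    unfolding f_def escape_count_def pair_count_graph_of ..
  have f_measurable: "f L \<in> borel_measurable M" for L
    unfolding f_def escape_count_def using assms(3)[OF admissible_pair_escape] .
  have unit_cell_borel: "unit_cell u \<in> sets borel"
    unfolding unit_cell_def by measurable
  have "(\<integral>\<^sup>+\<omega>. f 0 \<omega> \<partial>M) \<le> (\<integral>\<^sup>+\<omega>. ecount (Xs \<omega>) (unit_cell u) \<partial>M)"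
    unfolding f_eq by (intro nn_integral_mono ecount_mono) auto
  also have "\<dots> < \<infinity>"
    by (rule nn_integral_ecount_poisson_finite[OF assms(1,2) unit_cell_borel bounded_unit_cell])
  finally have f0_finite: "(\<integral>\<^sup>+\<omega>. f 0 \<omega> \<partial>M) < \<infinity>" .
  have "cell_nbhd L u \<subseteq> cell_nbhd (Suc L) u" for L
    unfolding cell_nbhd_def by force
  then have f_decreasing: "AE \<omega> in M. f (Suc L) \<omega> \<le> f L \<omega>" for L
    unfolding f_eq by (intro AE_I2 ecount_mono) auto
  have "AE \<omega> in M. finite (Xs \<omega> \<inter> unit_cell u)"
    using assms(2) bounded_unit_cell unfolding unit_poisson_pp_def by (auto elim!: AE_mp)
  then have "AE \<omega> in M. (INF L. f L \<omega>) = 0"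
  proof (rule AE_mp, intro AE_I2 impI)
    fix \<omega> assume "finite (Xs \<omega> \<inter> unit_cell u)"
    then obtain L where "f L \<omega> = 0"
      unfolding f_def using ex_escape_count_graph_of_eq_0 by blast
    then show "(INF L. f L \<omega>) = 0"
      by (metis INF_lower UNIV_I le_zero_eq)
  qed
  then have "(\<integral>\<^sup>+\<omega>. (INF L. f L \<omega>) \<partial>M) = 0"
    by (simp add: nn_integral_cong_AE)
  then show ?thesis
    using nn_integral_monotone_convergence_INF_AE[OF f_decreasing f_measurable f0_finite]
    unfolding f_def by simp
qed

lemma norm_diff_le_if_cell_nbhd:
  fixes x y u :: "'a::euclidean_space"
  assumes "x \<in> unit_cell u" and "y \<in> cell_nbhd L u"
  shows "norm (y - x) \<le> real DIM('a) * (real L + 1)"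
proof -
  have "\<bar>(y - x) \<bullet> b\<bar> \<le> real L + 1" if "b \<in> Basis" for b
    using assms that unfolding unit_cell_def cell_nbhd_def by (force simp: inner_diff_left abs_le_iff)
  then have "(\<Sum>b\<in>Basis. \<bar>(y - x) \<bullet> b\<bar>) \<le> (\<Sum>b\<in>(Basis::'a set). real L + 1)"
    by (rule sum_mono)
  then show ?thesis using norm_le_l1[of "y - x"] by simp
qed

lemma ex_unit_cell_in_lattice_cube:
  assumes "x \<in> box (- (R *\<^sub>R One)) (R *\<^sub>R One)" and "R \<le> real n"
  shows "\<exists>u\<in>lattice_cube 0 n. x \<in> unit_cell u"
proof
  define u where "u = (\<Sum>b\<in>Basis. real_of_int \<lfloor>x \<bullet> b\<rfloor> *\<^sub>R b)"
  have u: "u \<bullet> b = real_of_int \<lfloor>x \<bullet> b\<rfloor>" if "b \<in> Basis" for b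
    unfolding u_def using that by simp
  then show "x \<in> unit_cell u" unfolding unit_cell_def by auto
  have "- real n \<le> u \<bullet> b \<and> u \<bullet> b < real n" if "b \<in> Basis" for b
  proof -
    have "- R < x \<bullet> b" "x \<bullet> b < R"
      using assms(1) that by (auto simp: mem_box)
    then have "- int n \<le> \<lfloor>x \<bullet> b\<rfloor>" "\<lfloor>x \<bullet> b\<rfloor> < int n"
      using assms(2) unfolding le_floor_iff floor_less_iff by simp_all
    then show ?thesis unfolding u[OF that] by linarith
  qed
  moreover have "u \<in> lattice" unfolding lattice_def using u by auto
  ultimately show "u \<in> lattice_cube 0 n" unfolding lattice_cube_def by simp
qed

lemma card_far_points_le_escape_sum:
  fixes X :: "'a::euclidean_space set" and T :: "'a \<Rightarrow> 'a" and L n :: nat and R :: real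
  assumes "\<forall>B. bounded B \<longrightarrow> finite (X \<inter> B)" and "R \<le> real n"
  defines "S \<equiv> {x \<in> X. x \<in> box (- (R *\<^sub>R One)) (R *\<^sub>R One) \<and> norm (T x - x) > real DIM('a) * (real L + 1)}"
  shows "finite S \<and> of_nat (card S) \<le> escape_sum L n (graph_of X T)"
proof -
  define A where "A u = X \<inter> {x \<in> unit_cell u. T x \<in> - cell_nbhd L u}" for u
  have finite_A: "finite (A u)" for u
  proof -
    have "A u \<subseteq> X \<inter> unit_cell u" unfolding A_def by auto
    then show ?thesis using assms(1) bounded_unit_cell finite_subset by blast
  qed
  have "S \<subseteq> X \<inter> box (- (R *\<^sub>R One)) (R *\<^sub>R One)" unfolding S_def by auto
  then have finite_S: "finite S" using assms(1) bounded_box finite_subset by blast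
  have "S \<subseteq> (\<Union>u\<in>lattice_cube 0 n. A u)"
  proof
    fix x assume x: "x \<in> S"
    then obtain u where "u \<in> lattice_cube 0 n" "x \<in> unit_cell u"
      using ex_unit_cell_in_lattice_cube assms(2) unfolding S_def by blast
    moreover have "T x \<notin> cell_nbhd L u"
      using x norm_diff_le_if_cell_nbhd[OF \<open>x \<in> unit_cell u\<close>] unfolding S_def by force
    ultimately show "x \<in> (\<Union>u\<in>lattice_cube 0 n. A u)" using x unfolding S_def A_def by blast
  qed
  then have "card S \<le> card (\<Union>u\<in>lattice_cube 0 n. A u)"
    by (intro card_mono) (auto intro: finite_A finite_lattice_cube lattice_0)
  also have "\<dots> \<le> (\<Sum>u\<in>lattice_cube 0 n. card (A u))"
    by (intro card_UN_le finite_lattice_cube lattice_0)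
  finally have "of_nat (card S) \<le> (\<Sum>u\<in>lattice_cube 0 n. of_nat (card (A u)) :: ennreal)"
    by (simp flip: of_nat_sum)
  also have "\<dots> = escape_sum L n (graph_of X T)"
    unfolding escape_sum_def escape_count_def pair_count_graph_of
    using finite_A by (intro sum.cong) (simp_all add: ecount_eq A_def)
  finally show ?thesis using finite_S by simp
qed

lemma card_far_points_le:
  fixes X :: "'a::euclidean_space set" and T :: "'a \<Rightarrow> 'a" and L p :: nat and c R :: real
  assumes "\<forall>B. bounded B \<longrightarrow> finite (X \<inter> B)" and "escape_bounded_from L c p (graph_of X T)"
    and "c \<ge> 0" and "1 + real p \<le> R"
  defines "S \<equiv> {x \<in> X. x \<in> box (- (R *\<^sub>R One)) (R *\<^sub>R One) \<and> norm (T x - x) > real DIM('a) * (real L + 1)}"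
  shows "finite S \<and> real (card S) \<le> c * (2 * R) ^ DIM('a)"
proof -
  define n where "n = nat \<lceil>R\<rceil>"
  have "R \<le> real n" and "p \<le> n" and "real (n + p) \<le> 2 * R"
    using assms(4) unfolding n_def by linarith+
  then have "finite S \<and> of_nat (card S) \<le> escape_sum L n (graph_of X T)"
    unfolding S_def by (intro card_far_points_le_escape_sum assms(1))
  moreover have "escape_sum L n (graph_of X T) \<le> ennreal (c * real (n + p) ^ DIM('a))"
    using assms(2) \<open>p \<le> n\<close> unfolding escape_bounded_from_def by blast
  moreover have "c * real (n + p) ^ DIM('a) \<le> c * (2 * R) ^ DIM('a)"
    using \<open>real (n + p) \<le> 2 * R\<close> assms(3) by (intro mult_left_mono power_mono) auto
  ultimately have "finite S \<and> ennreal (real (card S)) \<le> ennreal (c * (2 * R) ^ DIM('a))"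
    by (metis ennreal_of_nat_eq_real_of_nat ennreal_leI order.trans)
  then show ?thesis
    using assms(3,4) by (subst (asm) ennreal_le_iff) auto
qed

definition escape_radius :: "nat \<Rightarrow> real \<Rightarrow> ('a::euclidean_space \<times> 'a) set \<Rightarrow> real" where
  "escape_radius L c H = 1 + real (LEAST p. escape_bounded_from L c p H)"

lemma measurable_escape_radius[measurable]: "escape_radius L c \<in> borel_measurable triple_space"
  unfolding escape_radius_def[abs_def] by measurable

lemma card_far_points_le_beyond_escape_radius:
  fixes X :: "'a::euclidean_space set" and T :: "'a \<Rightarrow> 'a" and L :: nat and c :: real
  assumes "\<forall>B. bounded B \<longrightarrow> finite (X \<inter> B)" and "\<exists>p. escape_bounded_from L c p (graph_of X T)"
    and "c \<ge> 0"
  shows "\<forall>R. R \<ge> escape_radius L c (graph_of X T) \<longrightarrow>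
    (let S = {x \<in> X. x \<in> box (- (R *\<^sub>R One)) (R *\<^sub>R One) \<and> norm (T x - x) > real DIM('a) * (real L + 1)}
     in finite S \<and> real (card S) \<le> c * (2 * R) ^ DIM('a))"
proof (intro allI impI)
  fix R assume "escape_radius L c (graph_of X T) \<le> R"
  moreover have "escape_bounded_from L c (LEAST p. escape_bounded_from L c p (graph_of X T)) (graph_of X T)"
    using assms(2) by (rule LeastI_ex)
  ultimately show "let S = {x \<in> X. x \<in> box (- (R *\<^sub>R One)) (R *\<^sub>R One)
        \<and> norm (T x - x) > real DIM('a) * (real L + 1)}
      in finite S \<and> real (card S) \<le> c * (2 * R) ^ DIM('a)"
    unfolding escape_radius_def Let_def using card_far_points_le[OF assms(1) _ assms(3)] by blast
qed

lemma AE_card_far_points_le: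
  fixes Xs :: "'w \<Rightarrow> 'a::euclidean_space set" and T :: "'w \<Rightarrow> 'a \<Rightarrow> 'a"
  assumes "prob_space M" and "unit_poisson_pp M Xs"
    and "\<And>U V. admissible_pair U V \<Longrightarrow>
           (\<lambda>\<omega>. pair_count (graph_of (Xs \<omega>) (T \<omega>)) U V) \<in> borel_measurable M"
    and "stationary_triple M (\<lambda>\<omega>. graph_of (Xs \<omega>) (T \<omega>))"
    and "ergodic_triple M (\<lambda>\<omega>. graph_of (Xs \<omega>) (T \<omega>))"
    and "c > 0"
  shows "\<exists>L. AE \<omega> in M. \<forall>R. R \<ge> escape_radius L c (graph_of (Xs \<omega>) (T \<omega>)) \<longrightarrow>
    (let S = {x \<in> Xs \<omega>. x \<in> box (- (R *\<^sub>R One)) (R *\<^sub>R One) \<and> norm (T \<omega> x - x) > real DIM('a) * (real L + 1)}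
     in finite S \<and> real (card S) \<le> c * (2 * R) ^ DIM('a))"
proof -
  define G where "G \<omega> = graph_of (Xs \<omega>) (T \<omega>)" for \<omega>
  interpret stationary_random_graph M G
    using assms(1,3,4) unfolding stationary_random_graph_def stationary_random_graph_axioms_def G_def
    by blast
  have "(INF L. \<integral>\<^sup>+\<omega>. escape_count L 0 (G \<omega>) \<partial>M) < ennreal (c / (2 * 8 ^ DIM('a)))"
    using INF_nn_integral_escape_count_eq_0[OF assms(1-3), of 0] assms(6) unfolding G_def by simp
  then obtain L where "(\<integral>\<^sup>+\<omega>. escape_count L 0 (G \<omega>) \<partial>M) \<le> ennreal (c / (2 * 8 ^ DIM('a)))"
    unfolding INF_less_iff by (blast intro: less_imp_le)
  then have "AE \<omega> in M. \<exists>p. escape_bounded_from L c p (G \<omega>)"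
    using assms(5,6) unfolding G_def[symmetric] by (intro AE_ex_escape_bounded_from)
  moreover have "AE \<omega> in M. \<forall>B. bounded B \<longrightarrow> finite (Xs \<omega> \<inter> B)"
    using assms(2) unfolding unit_poisson_pp_def by blast
  ultimately have "AE \<omega> in M. \<forall>R. R \<ge> escape_radius L c (graph_of (Xs \<omega>) (T \<omega>)) \<longrightarrow>
    (let S = {x \<in> Xs \<omega>. x \<in> box (- (R *\<^sub>R One)) (R *\<^sub>R One) \<and> norm (T \<omega> x - x) > real DIM('a) * (real L + 1)}
     in finite S \<and> real (card S) \<le> c * (2 * R) ^ DIM('a))"
  proof eventually_elim
    case (elim \<omega>)
    show ?case
      using elim(1) unfolding G_def
      by (rule card_far_points_le_beyond_escape_radius[OF elim(2) _ less_imp_le[OF assms(6)]])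
  qed
  then show ?thesis ..
qed

theorem lemma2p1:
  fixes M :: "'w measure"
    and Xs Ys :: "'w \<Rightarrow> ('a::euclidean_space) set"
    and T :: "'w \<Rightarrow> 'a \<Rightarrow> 'a"
  assumes "prob_space M"
    and "unit_poisson_pp M Xs" and "unit_poisson_pp M Ys"
    and "prob_space.indep_var M config_space Xs config_space Ys"
    and "AE \<omega> in M. bij_betw (T \<omega>) (Xs \<omega>) (Ys \<omega>) \<and> cyclically_monotone (Xs \<omega>) (T \<omega>)"
    and "\<And>U V. admissible_pair U V \<Longrightarrow>
           (\<lambda>\<omega>. pair_count (graph_of (Xs \<omega>) (T \<omega>)) U V) \<in> borel_measurable M"
    and "stationary_triple M (\<lambda>\<omega>. graph_of (Xs \<omega>) (T \<omega>))"
    and "ergodic_triple M (\<lambda>\<omega>. graph_of (Xs \<omega>) (T \<omega>))"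
  shows "\<forall>\<epsilon>>0. \<exists>L::real. \<exists>r::'w \<Rightarrow> real. r \<in> borel_measurable M \<and>
           (AE \<omega> in M. \<forall>R. R \<ge> r \<omega> \<longrightarrow>
              (let S = {x \<in> Xs \<omega>. x \<in> box (- (R *\<^sub>R One)) (R *\<^sub>R One) \<and> norm (T \<omega> x - x) > L}
               in finite S \<and> real (card S) \<le> (\<epsilon> * R) ^ DIM('a)))"
proof (intro allI impI)
  fix \<epsilon> :: real assume "\<epsilon> > 0"
  define c where "c = (\<epsilon> / 2) ^ DIM('a)"
  have "c > 0" using \<open>\<epsilon> > 0\<close> unfolding c_def by simp
  have scale: "c * (2 * R) ^ DIM('a) = (\<epsilon> * R) ^ DIM('a)" for R
  proof -
    have "c * (2 * R) ^ DIM('a) = (\<epsilon> / 2 * (2 * R)) ^ DIM('a)"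
      unfolding c_def by (rule power_mult_distrib[symmetric])
    then show ?thesis by simp
  qed
  obtain L where "AE \<omega> in M. \<forall>R. R \<ge> escape_radius L c (graph_of (Xs \<omega>) (T \<omega>)) \<longrightarrow>
    (let S = {x \<in> Xs \<omega>. x \<in> box (- (R *\<^sub>R One)) (R *\<^sub>R One) \<and> norm (T \<omega> x - x) > real DIM('a) * (real L + 1)}
     in finite S \<and> real (card S) \<le> (\<epsilon> * R) ^ DIM('a))"
    using AE_card_far_points_le[OF assms(1,2,6,7,8) \<open>c > 0\<close>] unfolding scale by blast
  moreover have "(\<lambda>\<omega>. escape_radius L c (graph_of (Xs \<omega>) (T \<omega>))) \<in> borel_measurable M"
    using measurable_triple_spaceI[OF assms(6)] by measurable
  ultimately show "\<exists>L r. r \<in> borel_measurable M \<and> (AE \<omega> in M. \<forall>R. R \<ge> r \<omega> \<longrightarrow>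
      (let S = {x \<in> Xs \<omega>. x \<in> box (- (R *\<^sub>R One)) (R *\<^sub>R One) \<and> norm (T \<omega> x - x) > L}
       in finite S \<and> real (card S) \<le> (\<epsilon> * R) ^ DIM('a)))"
    by (intro exI[of _ "real DIM('a) * (real L + 1)"] exI conjI)
qed

end
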